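(* Let $\Lambda\Subset\mathbb X$ and fix a selector $s$. Let $\rho_0=\mathbf 1_{\{\varnothing\}}$ and $\rho_{n+1}=K_\Lambda\rho_n$ for $n\in\mathbb N_0$. Suppose there exists a function $\xi:\mathbf F\to[0,\infty)$ with $\tilde K_\Lambda\xi\le\xi$ pointwise and $\xi(\varnothing)=1$. Then the pointwise limit $\rho(X)=\lim_{n\to\infty}\rho_n(X)$ exists for every $X\in\mathbf F$, and $\rho=K_\Lambda\rho$, $\rho(\varnothing)=1$ and $|\rho|\le\xi$ pointwise.
   Context: $\mathbb X$ is a finite or countably infinite set, $X\Subset\mathbb X$ means finite subset, $\mathbf F$ is the set of finite subsets. Fix $z:\mathbb X\to\mathbb C$, $W:\mathbf F\to\mathbb C$. Conditional interaction: $W(X\mid B)=\prod_{C\subset B}W(X\cup C)$ if $X\cap B=\varnothing$, $W(X\mid B)=0$ if $X=\{y\}$ with $y\in B$, $W(X\mid B)=1$ otherwise. Boltzmann factor $\kappa(X\mid B)=\prod_{\varnothing\neq S\subset X}W(S\mid B)$, $\kappa(s\mid B)=\kappa(\{s\}\mid B)$. Kernel: $\gamma(s,N\mid B)=\sum_{M\subset N}(-1)^{|N\setminus M|}\kappa(s\mid B\cup M)$. A selector is a map $s:\mathbf F\setminus\{\varnothing\}\to\mathbb X$ with $s_X:=s(X)\in X$; put $X'_s=X\setminus\{s_X\}$. For $\rho:\mathbf F\to\mathbb C$: $(K_\Lambda\rho)(\varnothing)=\rho(\varnothing)$ and, for $X\neq\varnothing$, $(K_\Lambda\rho)(X)=\sum_{N\subset\Lambda\setminus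 X'_s}z(s_X)\gamma(s_X,N\mid X'_s)\rho(X'_s\cup N)$. For $\tilde\rho:\mathbf F\to[0,\infty)$: $(\tilde K_\Lambda\tilde\rho)(\varnothing)=\tilde\rho(\varnothing)$ and, for $X\neq\varnothing$, $(\tilde K_\Lambda\tilde\rho)(X)=\sum_{N\subset\Lambda\setminus X'_s}|z(s_X)|\,|\gamma(s_X,N\mid X'_s)|\,\tilde\rho(X'_s\cup N)$. *)

theory Defs
  imports "HOL-Analysis.Analysis" "HOL-Library.Countable"
begin

text \<open>Finite subsets of the (countable) ground type 'x are sets X with finite X.
  Functions on the finite subsets are modelled as functions on 'x set whose values
  at infinite sets are irrelevant.\<close>

definition W_cond :: "('x set \<Rightarrow> complex) \<Rightarrow> 'x set \<Rightarrow> 'x set \<Rightarrow> complex" where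
  "W_cond W X B =
     (if X \<inter> B = {} then (\<Prod>C\<in>Pow B. W (X \<union> C))
      else if (\<exists>y. X = {y} \<and> y \<in> B) then 0 else 1)"

definition kappa :: "('x set \<Rightarrow> complex) \<Rightarrow> 'x set \<Rightarrow> 'x set \<Rightarrow> complex" where
  "kappa W X B = (\<Prod>S\<in>Pow X - {{}}. W_cond W S B)"

definition kappa1 :: "('x set \<Rightarrow> complex) \<Rightarrow> 'x \<Rightarrow> 'x set \<Rightarrow> complex" where
  "kappa1 W s B = kappa W {s} B"

definition gamma :: "('x set \<Rightarrow> complex) \<Rightarrow> 'x \<Rightarrow> 'x set \<Rightarrow> 'x set \<Rightarrow> complex" where
  "gamma W s N B = (\<Sum>M\<in>Pow N. (-1) ^ card (N - M) * kappa1 W s (B \<union> M))"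

definition selector :: "('x set \<Rightarrow> 'x) \<Rightarrow> bool" where
  "selector sel \<longleftrightarrow> (\<forall>X. finite X \<and> X \<noteq> {} \<longrightarrow> sel X \<in> X)"

definition K_op :: "('x \<Rightarrow> complex) \<Rightarrow> ('x set \<Rightarrow> complex) \<Rightarrow> ('x set \<Rightarrow> 'x)
    \<Rightarrow> 'x set \<Rightarrow> ('x set \<Rightarrow> complex) \<Rightarrow> 'x set \<Rightarrow> complex" where
  "K_op z W sel \<Lambda> \<rho> X =
     (if X = {} then \<rho> {}
      else (let X' = X - {sel X} in
        \<Sum>N\<in>Pow (\<Lambda> - X'). z (sel X) * gamma W (sel X) N X' * \<rho> (X' \<union> N)))"

definition K_tilde :: "('x \<Rightarrow> complex) \<Rightarrow> ('x set \<Rightarrow> complex) \<Rightarrow> ('x set \<Rightarrow> 'x)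
    \<Rightarrow> 'x set \<Rightarrow> ('x set \<Rightarrow> real) \<Rightarrow> 'x set \<Rightarrow> real" where
  "K_tilde z W sel \<Lambda> \<rho> X =
     (if X = {} then \<rho> {}
      else (let X' = X - {sel X} in
        \<Sum>N\<in>Pow (\<Lambda> - X'). cmod (z (sel X)) * cmod (gamma W (sel X) N X') * \<rho> (X' \<union> N)))"

primrec rho_seq :: "('x \<Rightarrow> complex) \<Rightarrow> ('x set \<Rightarrow> complex) \<Rightarrow> ('x set \<Rightarrow> 'x)
    \<Rightarrow> 'x set \<Rightarrow> nat \<Rightarrow> 'x set \<Rightarrow> complex" where
  "rho_seq z W sel \<Lambda> 0 = (\<lambda>X. if X = {} then 1 else 0)"
| "rho_seq z W sel \<Lambda> (Suc n) = K_op z W sel \<Lambda> (rho_seq z W sel \<Lambda> n)"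

end

theory Submission
  imports Defs
begin

text \<open>Let \<open>\<rho>'\<^sub>n\<close> be the iterates of the majorant operator \<open>K_tilde\<close> started at \<open>\<rho>\<^sub>0\<close>.
  Since \<open>K_op\<close> is linear and \<open>norm (K_op f) \<le> K_tilde g\<close> whenever \<open>norm f \<le> g\<close>, induction gives
  \<open>norm (\<rho>\<^sub>n\<^sub>+\<^sub>1 - \<rho>\<^sub>n) \<le> \<rho>'\<^sub>n\<^sub>+\<^sub>1 - \<rho>'\<^sub>n\<close>.  Monotonicity of \<open>K_tilde\<close> and \<open>K_tilde \<xi> \<le> \<xi>\<close> give
  \<open>\<rho>'\<^sub>n \<le> \<xi>\<close>, so the telescoping series of increments of \<open>\<rho>\<^sub>n\<close> converges absolutely.  The
  limit is a fixed point of \<open>K_op\<close> because \<open>K_op\<close> is a finite sum, hence continuous under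
  pointwise limits.  None of this uses that the selector picks a point of its argument.\<close>

primrec rho_tilde_seq :: "('x \<Rightarrow> complex) \<Rightarrow> ('x set \<Rightarrow> complex) \<Rightarrow> ('x set \<Rightarrow> 'x)
    \<Rightarrow> 'x set \<Rightarrow> nat \<Rightarrow> 'x set \<Rightarrow> real" where
  "rho_tilde_seq z W sel \<Lambda> 0 = (\<lambda>X. if X = {} then 1 else 0)"
| "rho_tilde_seq z W sel \<Lambda> (Suc n) = K_tilde z W sel \<Lambda> (rho_tilde_seq z W sel \<Lambda> n)"

lemma K_op_diff:
  "K_op z W sel \<Lambda> f X - K_op z W sel \<Lambda> g X = K_op z W sel \<Lambda> (\<lambda>Y. f Y - g Y) X"
  by (simp add: K_op_def Let_def sum_subtractf[symmetric] right_diff_distrib)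

lemma K_tilde_diff:
  "K_tilde z W sel \<Lambda> f X - K_tilde z W sel \<Lambda> g X = K_tilde z W sel \<Lambda> (\<lambda>Y. f Y - g Y) X"
  by (simp add: K_tilde_def Let_def sum_subtractf[symmetric] right_diff_distrib)

lemma norm_K_op_le_K_tilde:
  assumes "\<And>Y. norm (f Y) \<le> g Y"
  shows "norm (K_op z W sel \<Lambda> f X) \<le> K_tilde z W sel \<Lambda> g X"
proof (cases "X = {}")
  case True
  then show ?thesis using assms by (simp add: K_op_def K_tilde_def)
next
  case False
  let ?X' = "X - {sel X}"
  have "norm (K_op z W sel \<Lambda> f X)
      \<le> (\<Sum>N\<in>Pow (\<Lambda> - ?X'). norm (z (sel X) * gamma W (sel X) N ?X' * f (?X' \<union> N)))"
    using False by (simp add: K_op_def Let_def norm_sum)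
  also have "\<dots> \<le> (\<Sum>N\<in>Pow (\<Lambda> - ?X'). cmod (z (sel X)) * cmod (gamma W (sel X) N ?X') * g (?X' \<union> N))"
    by (intro sum_mono) (simp add: norm_mult mult_left_mono assms)
  also have "\<dots> = K_tilde z W sel \<Lambda> g X"
    using False by (simp add: K_tilde_def Let_def)
  finally show ?thesis .
qed

lemma K_tilde_mono:
  assumes "finite \<Lambda>" "finite X" and le: "\<And>Y. finite Y \<Longrightarrow> f Y \<le> g Y"
  shows "K_tilde z W sel \<Lambda> f X \<le> K_tilde z W sel \<Lambda> g X"
proof -
  have "finite (X - {sel X} \<union> N)" if "N \<in> Pow (\<Lambda> - (X - {sel X}))" for N
    using that assms(1,2) by (auto intro: finite_subset)
  then show ?thesis
    unfolding K_tilde_def Let_def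
    by (auto intro!: sum_mono mult_left_mono le)
qed

lemma tendsto_K_op:
  assumes "finite \<Lambda>" "finite X"
    and lim: "\<And>Y. finite Y \<Longrightarrow> (\<lambda>n. f n Y) \<longlonglongrightarrow> g Y"
  shows "(\<lambda>n. K_op z W sel \<Lambda> (f n) X) \<longlonglongrightarrow> K_op z W sel \<Lambda> g X"
proof -
  have "finite (X - {sel X} \<union> N)" if "N \<in> Pow (\<Lambda> - (X - {sel X}))" for N
    using that assms(1,2) by (auto intro: finite_subset)
  then show ?thesis
    unfolding K_op_def Let_def
    using lim[of "{}"] by (auto intro!: tendsto_sum tendsto_mult lim)
qed

lemma convergent_if_increments_dominated:
  fixes a :: "nat \<Rightarrow> 'a::banach" and b :: "nat \<Rightarrow> real"
  assumes dom: "\<And>n. norm (a (Suc n) - a n) \<le> b (Suc n) - b n"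
    and bounded: "\<And>n. b n \<le> B"
  shows "convergent a"
proof -
  have "0 \<le> b (Suc n) - b n" for n
    using dom[of n] norm_ge_zero order_trans by blast
  moreover have "(\<Sum>i<n. b (Suc i) - b i) \<le> B - b 0" for n
    using bounded[of n] by (simp add: sum_lessThan_telescope)
  ultimately have "summable (\<lambda>n. b (Suc n) - b n)"
    by (rule summableI_nonneg_bounded)
  then have "summable (\<lambda>n. a (Suc n) - a n)"
    by (rule summable_comparison_test') (rule dom)
  then have "(\<lambda>n. a 0 + (\<Sum>i<n. a (Suc i) - a i)) \<longlonglongrightarrow> a 0 + (\<Sum>n. a (Suc n) - a n)"
    by (intro tendsto_add tendsto_const summable_LIMSEQ)
  then show ?thesis
    unfolding convergent_def by (auto simp: sum_lessThan_telescope)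
qed

lemma rho_seq_empty: "rho_seq z W sel \<Lambda> n {} = 1"
  by (induction n) (simp_all add: K_op_def)

lemma norm_rho_seq_le: "norm (rho_seq z W sel \<Lambda> n X) \<le> rho_tilde_seq z W sel \<Lambda> n X"
  by (induction n arbitrary: X) (simp_all add: norm_K_op_le_K_tilde)

lemma norm_rho_seq_increment_le:
  "norm (rho_seq z W sel \<Lambda> (Suc n) X - rho_seq z W sel \<Lambda> n X)
     \<le> rho_tilde_seq z W sel \<Lambda> (Suc n) X - rho_tilde_seq z W sel \<Lambda> n X"
proof (induction n arbitrary: X)
  case 0
  have "norm (K_op z W sel \<Lambda> (rho_seq z W sel \<Lambda> 0) X)
      \<le> K_tilde z W sel \<Lambda> (rho_tilde_seq z W sel \<Lambda> 0) X"
    by (rule norm_K_op_le_K_tilde) simp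
  then show ?case
    by (cases "X = {}") (simp_all add: K_op_def K_tilde_def)
next
  case (Suc n)
  then show ?case
    by (simp only: rho_seq.simps rho_tilde_seq.simps K_op_diff K_tilde_diff norm_K_op_le_K_tilde)
qed

lemma rho_tilde_seq_le_supersolution:
  assumes "finite \<Lambda>"
    and nonneg: "\<And>X. finite X \<Longrightarrow> 0 \<le> \<xi> X"
    and super: "\<And>X. finite X \<Longrightarrow> K_tilde z W sel \<Lambda> \<xi> X \<le> \<xi> X"
    and "1 \<le> \<xi> {}"
    and "finite X"
  shows "rho_tilde_seq z W sel \<Lambda> n X \<le> \<xi> X"
  using \<open>finite X\<close>
proof (induction n arbitrary: X)
  case 0
  then show ?case using nonneg \<open>1 \<le> \<xi> {}\<close> by simp
next
  case (Suc n)
  have "K_tilde z W sel \<Lambda> (rho_tilde_seq z W sel \<Lambda> n) X \<le> K_tilde z W sel \<Lambda> \<xi> X"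
    using \<open>finite \<Lambda>\<close> Suc by (intro K_tilde_mono)
  then show ?case using super[OF Suc.prems] by simp
qed

theorem proposition6p3:
  fixes z :: "'x::countable \<Rightarrow> complex"
    and W :: "'x set \<Rightarrow> complex"
    and sel :: "'x set \<Rightarrow> 'x"
    and \<Lambda> :: "'x set"
    and \<xi> :: "'x set \<Rightarrow> real"
  assumes "finite \<Lambda>"
    and "selector sel"
    and "\<forall>X. finite X \<longrightarrow> \<xi> X \<ge> 0"
    and "\<forall>X. finite X \<longrightarrow> K_tilde z W sel \<Lambda> \<xi> X \<le> \<xi> X"
    and "\<xi> {} = 1"
  shows "\<exists>\<rho> :: 'x set \<Rightarrow> complex.
           (\<forall>X. finite X \<longrightarrow> (\<lambda>n. rho_seq z W sel \<Lambda> n X) \<longlonglongrightarrow> \<rho> X)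
         \<and> (\<forall>X. finite X \<longrightarrow> \<rho> X = K_op z W sel \<Lambda> \<rho> X)
         \<and> \<rho> {} = 1
         \<and> (\<forall>X. finite X \<longrightarrow> cmod (\<rho> X) \<le> \<xi> X)"
proof -
  let ?r = "rho_seq z W sel \<Lambda>"
  define \<rho> where "\<rho> X = lim (\<lambda>n. ?r n X)" for X
  have majorant: "rho_tilde_seq z W sel \<Lambda> n X \<le> \<xi> X" if "finite X" for n X
    using assms(1,3-5) that by (intro rho_tilde_seq_le_supersolution) auto
  have conv: "(\<lambda>n. ?r n X) \<longlonglongrightarrow> \<rho> X" if "finite X" for X
  proof -
    have "convergent (\<lambda>n. ?r n X)"
      using norm_rho_seq_increment_le majorant[OF that]
      by (rule convergent_if_increments_dominated)
    then show ?thesis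
      unfolding \<rho>_def by (simp add: convergent_LIMSEQ_iff)
  qed
  have "\<rho> X = K_op z W sel \<Lambda> \<rho> X" if "finite X" for X
  proof (rule LIMSEQ_unique)
    show "(\<lambda>n. ?r (Suc n) X) \<longlonglongrightarrow> \<rho> X"
      using conv[OF that] by (rule LIMSEQ_Suc)
    show "(\<lambda>n. ?r (Suc n) X) \<longlonglongrightarrow> K_op z W sel \<Lambda> \<rho> X"
      using assms(1) that conv by (simp add: tendsto_K_op)
  qed
  moreover have "\<rho> {} = 1"
    unfolding \<rho>_def by (simp add: rho_seq_empty)
  moreover have "cmod (\<rho> X) \<le> \<xi> X" if "finite X" for X
  proof (rule LIMSEQ_le_const2)
    show "(\<lambda>n. cmod (?r n X)) \<longlonglongrightarrow> cmod (\<rho> X)"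
      using conv[OF that] by (rule tendsto_norm)
    show "\<exists>N. \<forall>n\<ge>N. cmod (?r n X) \<le> \<xi> X"
      using norm_rho_seq_le majorant[OF that] order_trans by blast
  qed
  ultimately show ?thesis using conv by blast
qed

end
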